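(* Let $A_i,B_i,C_i$ ($i=1,2,3$) be random variables on a probability space with values in $\{-1,1\}$, and write ${\rm E}$ for expectation. Suppose that ${\rm E}(A_1^{k_1}A_2^{k_2}A_3^{k_3}C_1^{k_4}C_2^{k_5}C_3^{k_6})={\rm E}(A_1^{k_1}A_2^{k_2}A_3^{k_3})\,{\rm E}(C_1^{k_4}C_2^{k_5}C_3^{k_6})$ for all $k_1,\dots,k_6\in\{0,1\}$; that ${\rm E}(A_i)={\rm E}(B_i)={\rm E}(C_i)=0$ for $i\in\{1,2,3\}$; that ${\rm E}(A_iB_j)={\rm E}(B_iC_j)=0$ for $i\neq j$; and that ${\rm E}(A_iB_jC_k)=0$ whenever $i,j,k\in\{1,2,3\}$ with $|\{i,j,k\}|\le2$. Then $$\frac13\sum_{i=1}^3\big({\rm E}(B_iC_i)-{\rm E}(A_iB_i)\big)-\sum_{\{i,j,k\}=\{1,2,3\}}{\rm E}(A_iB_jC_k)\le4,$$ where the last sum is over the six permutations $(i,j,k)$ of $(1,2,3)$. *)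

theory Defs
  imports "HOL-Probability.Probability"
begin

end

theory Submission
  imports Defs
begin

text \<open>Group the six triple correlations according to the index \<open>j\<close> of \<open>B\<close>, and let \<open>i, k\<close> be
  the other two indices. For \<open>\<plusminus>1\<close>-valued variables and either sign \<open>s = \<plusminus>1\<close>,
  \<open>(B\<^sub>jC\<^sub>j - A\<^sub>jB\<^sub>j)/3 - B\<^sub>j(A\<^sub>iC\<^sub>k + A\<^sub>kC\<^sub>i) \<le> (1 - A\<^sub>jC\<^sub>j)/3 + sB\<^sub>j(A\<^sub>iC\<^sub>i + A\<^sub>kC\<^sub>k) + (1 + sA\<^sub>iA\<^sub>k)(1 + sC\<^sub>iC\<^sub>k)\<close>
  holds pointwise. By independence of the \<open>A\<close>'s from the \<open>C\<close>'s and the vanishing triple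
  correlations, the right-hand side has expectation \<open>1/3 + (1 + s\<alpha>)(1 + s\<gamma>)\<close> with
  \<open>\<alpha> = E(A\<^sub>iA\<^sub>k)\<close>, \<open>\<gamma> = E(C\<^sub>iC\<^sub>k)\<close>, and one of the two signs makes this at most \<open>4/3\<close>.
  Summing over \<open>j\<close> gives the bound \<open>4\<close>.\<close>

definition sign_rv :: "'a measure \<Rightarrow> ('a \<Rightarrow> real) \<Rightarrow> bool" where
  "sign_rv M X \<longleftrightarrow> X \<in> borel_measurable M \<and> (\<forall>x\<in>space M. X x \<in> {-1, 1})"

lemma sign_rv_mult: "sign_rv M X \<Longrightarrow> sign_rv M Y \<Longrightarrow> sign_rv M (\<lambda>x. X x * Y x)"
  unfolding sign_rv_def by force

lemma (in prob_space) integrable_sign_rv: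
  assumes "sign_rv M X"
  shows "integrable M X"
proof -
  have "AE x in M. norm (X x) \<le> 1"
    by (rule AE_I2) (use assms in \<open>auto simp: sign_rv_def\<close>)
  with assms show ?thesis
    by (auto simp: sign_rv_def intro: integrable_const_bound[where B=1])
qed

lemma (in prob_space) abs_expectation_sign_rv_le_1:
  assumes "sign_rv M X"
  shows "\<bar>expectation X\<bar> \<le> 1"
proof -
  have "AE x in M. -1 \<le> X x \<and> X x \<le> 1"
    by (rule AE_I2) (use assms in \<open>auto simp: sign_rv_def\<close>)
  then show ?thesis
    using integrable_sign_rv[OF assms]
    by (auto simp: abs_le_iff intro: integral_le_const integral_ge_const)
qed

lemma sign_diff_le:
  fixes a b c :: real
  assumes "a \<in> {-1, 1}" "b \<in> {-1, 1}" "c \<in> {-1, 1}"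
  shows "b * c - a * b \<le> 1 - a * c"
  using assms by auto

text \<open>With \<open>u = a1 + s * a2\<close> and \<open>v = c1 + s * c2\<close> the right-hand side minus the left-hand side
  is \<open>s * b * u * v + (u * v)\<^sup>2 / 4\<close>, and \<open>u * v \<in> {-4, 0, 4}\<close>.\<close>

lemma sign_cross_le:
  fixes s b a1 a2 c1 c2 :: real
  assumes "s \<in> {-1, 1}" "b \<in> {-1, 1}" "a1 \<in> {-1, 1}" "a2 \<in> {-1, 1}" "c1 \<in> {-1, 1}" "c2 \<in> {-1, 1}"
  shows "- (b * (a1 * c2 + a2 * c1)) \<le> s * b * (a1 * c1 + a2 * c2) + (1 + s * a1 * a2) * (1 + s * c1 * c2)"
  using assms by auto

lemma exists_sign_mult_le_1:
  fixes \<alpha> \<gamma> :: real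
  assumes "\<bar>\<alpha>\<bar> \<le> 1" "\<bar>\<gamma>\<bar> \<le> 1"
  obtains s where "s \<in> {-1, 1}" "(1 + s * \<alpha>) * (1 + s * \<gamma>) \<le> 1"
proof (cases "0 \<le> \<alpha> + \<gamma>")
  case True
  with assms have "\<alpha> * \<gamma> \<le> \<alpha> + \<gamma>"
    by (smt (verit) mult_le_0_iff mult_right_le_one_le)
  then show ?thesis
    by (intro that[of "-1"]) (auto simp: algebra_simps)
next
  case False
  with assms have "\<alpha> * \<gamma> \<le> - (\<alpha> + \<gamma>)"
    by (smt (verit) mult_le_0_iff mult_right_le_one_le mult_minus_left mult_minus_right)
  then show ?thesis
    by (intro that[of 1]) (auto simp: algebra_simps)
qed

lemma (in prob_space) sign_block_le:
  assumes sign: "sign_rv M a1" "sign_rv M a2" "sign_rv M a3" "sign_rv M b"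
      "sign_rv M c1" "sign_rv M c2" "sign_rv M c3"
    and diag: "expectation (\<lambda>x. a3 x * c3 x) = 0"
    and indep: "expectation (\<lambda>x. a1 x * a2 x * c1 x * c2 x)
      = expectation (\<lambda>x. a1 x * a2 x) * expectation (\<lambda>x. c1 x * c2 x)"
    and triple1: "expectation (\<lambda>x. a1 x * b x * c1 x) = 0"
    and triple2: "expectation (\<lambda>x. a2 x * b x * c2 x) = 0"
  shows "(expectation (\<lambda>x. b x * c3 x) - expectation (\<lambda>x. a3 x * b x)) / 3
      - expectation (\<lambda>x. a1 x * b x * c2 x) - expectation (\<lambda>x. a2 x * b x * c1 x) \<le> 4 / 3"
proof -
  define \<alpha> where "\<alpha> = expectation (\<lambda>x. a1 x * a2 x)"
  define \<gamma> where "\<gamma> = expectation (\<lambda>x. c1 x * c2 x)"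
  have "\<bar>\<alpha>\<bar> \<le> 1" "\<bar>\<gamma>\<bar> \<le> 1"
    unfolding \<alpha>_def \<gamma>_def by (intro abs_expectation_sign_rv_le_1 sign_rv_mult sign)+
  then obtain s where s: "s \<in> {-1, 1}" and s_le: "(1 + s * \<alpha>) * (1 + s * \<gamma>) \<le> 1"
    by (rule exists_sign_mult_le_1)
  have integrable_terms: "integrable M (\<lambda>x. b x * c3 x)" "integrable M (\<lambda>x. a3 x * b x)"
    "integrable M (\<lambda>x. a1 x * b x * c2 x)" "integrable M (\<lambda>x. a2 x * b x * c1 x)"
    "integrable M (\<lambda>x. a3 x * c3 x)" "integrable M (\<lambda>x. a1 x * b x * c1 x)"
    "integrable M (\<lambda>x. a2 x * b x * c2 x)" "integrable M (\<lambda>x. a1 x * a2 x)"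
    "integrable M (\<lambda>x. c1 x * c2 x)" "integrable M (\<lambda>x. a1 x * a2 x * c1 x * c2 x)"
    by (intro integrable_sign_rv sign_rv_mult sign)+
  have vals: "x \<in> space M \<Longrightarrow> a1 x \<in> {-1, 1} \<and> a2 x \<in> {-1, 1} \<and> a3 x \<in> {-1, 1} \<and> b x \<in> {-1, 1}
      \<and> c1 x \<in> {-1, 1} \<and> c2 x \<in> {-1, 1} \<and> c3 x \<in> {-1, 1}" for x
    using sign by (simp add: sign_rv_def)
  have "(expectation (\<lambda>x. b x * c3 x) - expectation (\<lambda>x. a3 x * b x)) / 3
      - expectation (\<lambda>x. a1 x * b x * c2 x) - expectation (\<lambda>x. a2 x * b x * c1 x)
    = expectation (\<lambda>x. (b x * c3 x - a3 x * b x) / 3 - b x * (a1 x * c2 x + a2 x * c1 x))"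
    using integrable_terms by (simp add: algebra_simps)
  also have "\<dots> \<le> expectation (\<lambda>x. (1 - a3 x * c3 x) / 3
      + s * b x * (a1 x * c1 x + a2 x * c2 x) + (1 + s * a1 x * a2 x) * (1 + s * c1 x * c2 x))"
  proof (rule integral_mono)
    fix x assume "x \<in> space M"
    with vals s have "b x * c3 x - a3 x * b x \<le> 1 - a3 x * c3 x"
      and "- (b x * (a1 x * c2 x + a2 x * c1 x))
        \<le> s * b x * (a1 x * c1 x + a2 x * c2 x) + (1 + s * a1 x * a2 x) * (1 + s * c1 x * c2 x)"
      by (simp_all add: sign_diff_le sign_cross_le del: insert_iff)
    then show "(b x * c3 x - a3 x * b x) / 3 - b x * (a1 x * c2 x + a2 x * c1 x)
      \<le> (1 - a3 x * c3 x) / 3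
        + s * b x * (a1 x * c1 x + a2 x * c2 x) + (1 + s * a1 x * a2 x) * (1 + s * c1 x * c2 x)"
      by argo
  qed (use integrable_terms in \<open>simp_all add: algebra_simps\<close>)
  also have "\<dots> = 1 / 3 + (1 + s * \<alpha>) * (1 + s * \<gamma>)"
    using integrable_terms diag indep triple1 triple2 s by (auto simp: \<alpha>_def \<gamma>_def algebra_simps prob_space)
  also have "\<dots> \<le> 4 / 3"
    using s_le by simp
  finally show ?thesis .
qed

lemma triples_onto_123:
  "{(i, j, k). {i, j, k} = {1, 2, 3 :: nat}}
    = {(1, 2, 3), (1, 3, 2), (2, 1, 3), (2, 3, 1), (3, 1, 2), (3, 2, 1)}"
  (is "?L = ?R")
proof (intro equalityI subsetI)
  fix t assume "t \<in> ?L"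
  then obtain i j k where t: "t = (i, j, k)" and ijk: "{i, j, k} = {1, 2, 3 :: nat}"
    by blast
  have "i = 1 \<or> i = 2 \<or> i = 3" "j = 1 \<or> j = 2 \<or> j = 3" "k = 1 \<or> k = 2 \<or> k = 3"
    and "1 \<in> {i, j, k}" "2 \<in> {i, j, k}" "3 \<in> {i, j, k}"
    using ijk by blast+
  then show "t \<in> ?R"
    unfolding t by (elim disjE) simp_all
qed auto

theorem proposition5p3:
  fixes M :: "'a measure" and A B C :: "nat \<Rightarrow> 'a \<Rightarrow> real"
  assumes P: "prob_space M"
    and meas: "\<And>i. i \<in> {1,2,3} \<Longrightarrow> A i \<in> borel_measurable M \<and> B i \<in> borel_measurable M \<and> C i \<in> borel_measurable M"
    and vals: "\<And>i x. i \<in> {1,2,3} \<Longrightarrow> x \<in> space M \<Longrightarrow>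
                 A i x \<in> {-1,1} \<and> B i x \<in> {-1,1} \<and> C i x \<in> {-1,1}"
    and indep: "\<And>k1 k2 k3 k4 k5 k6 :: nat. k1 \<in> {0,1} \<Longrightarrow> k2 \<in> {0,1} \<Longrightarrow> k3 \<in> {0,1} \<Longrightarrow>
                 k4 \<in> {0,1} \<Longrightarrow> k5 \<in> {0,1} \<Longrightarrow> k6 \<in> {0,1} \<Longrightarrow>
        integral\<^sup>L M (\<lambda>x. A 1 x ^ k1 * A 2 x ^ k2 * A 3 x ^ k3 * C 1 x ^ k4 * C 2 x ^ k5 * C 3 x ^ k6)
        = integral\<^sup>L M (\<lambda>x. A 1 x ^ k1 * A 2 x ^ k2 * A 3 x ^ k3)
          * integral\<^sup>L M (\<lambda>x. C 1 x ^ k4 * C 2 x ^ k5 * C 3 x ^ k6)"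
    and mean0: "\<And>i. i \<in> {1,2,3} \<Longrightarrow> integral\<^sup>L M (A i) = 0 \<and>
                  integral\<^sup>L M (B i) = 0 \<and> integral\<^sup>L M (C i) = 0"
    and pair0: "\<And>i j. i \<in> {1,2,3} \<Longrightarrow> j \<in> {1,2,3} \<Longrightarrow> i \<noteq> j \<Longrightarrow>
                  integral\<^sup>L M (\<lambda>x. A i x * B j x) = 0 \<and>
                  integral\<^sup>L M (\<lambda>x. B i x * C j x) = 0"
    and triple0: "\<And>i j k. i \<in> {1,2,3} \<Longrightarrow> j \<in> {1,2,3} \<Longrightarrow> k \<in> {1,2,3} \<Longrightarrow>
                  card {i,j,k} \<le> 2 \<Longrightarrow> integral\<^sup>L M (\<lambda>x. A i x * B j x * C k x) = 0"
  shows "(1/3) * (\<Sum>i\<in>{1,2,3::nat}. integral\<^sup>L M (\<lambda>x. B i x * C i x)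
                                   - integral\<^sup>L M (\<lambda>x. A i x * B i x))
         - (\<Sum>(i,j,k)\<in>{(i,j,k). {i,j,k} = {1,2,3::nat}}. integral\<^sup>L M (\<lambda>x. A i x * B j x * C k x))
         \<le> 4"
proof -
  interpret prob_space M by (fact P)
  have sign: "sign_rv M (A i)" "sign_rv M (B i)" "sign_rv M (C i)" if "i \<in> {1, 2, 3}" for i
    using meas[OF that] vals[OF that] by (auto simp: sign_rv_def)
  let ?D = "\<lambda>i. expectation (\<lambda>x. B i x * C i x) - expectation (\<lambda>x. A i x * B i x)"
  let ?T = "\<lambda>i j k. expectation (\<lambda>x. A i x * B j x * C k x)"
  have "?D 1 / 3 - ?T 2 1 3 - ?T 3 1 2 \<le> 4 / 3"
    by (rule sign_block_le)
      (use sign mean0 indep[of 1 0 0 1 0 0] indep[of 0 1 1 0 1 1] triple0[of 2 1 2] triple0[of 3 1 3]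
        in \<open>simp_all add: card_insert_if\<close>)
  moreover have "?D 2 / 3 - ?T 1 2 3 - ?T 3 2 1 \<le> 4 / 3"
    by (rule sign_block_le)
      (use sign mean0 indep[of 0 1 0 0 1 0] indep[of 1 0 1 1 0 1] triple0[of 1 2 1] triple0[of 3 2 3]
        in \<open>simp_all add: card_insert_if\<close>)
  moreover have "?D 3 / 3 - ?T 1 3 2 - ?T 2 3 1 \<le> 4 / 3"
    by (rule sign_block_le)
      (use sign mean0 indep[of 0 0 1 0 0 1] indep[of 1 1 0 1 1 0] triple0[of 1 3 1] triple0[of 2 3 2]
        in \<open>simp_all add: card_insert_if\<close>)
  moreover have "(\<Sum>(i, j, k) \<in> {(i, j, k). {i, j, k} = {1, 2, 3 :: nat}}. ?T i j k)
      = ?T 1 2 3 + ?T 1 3 2 + ?T 2 1 3 + ?T 2 3 1 + ?T 3 1 2 + ?T 3 2 1"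
    unfolding triples_onto_123 by simp
  moreover have "(\<Sum>i \<in> {1, 2, 3 :: nat}. ?D i) = ?D 1 + ?D 2 + ?D 3"
    by simp
  ultimately show ?thesis
    by argo
qed

end
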